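(* Let $\Delta$, $k$, and $n$ be natural numbers. Let $\mathcal{G}$ be a $\Delta$-temporally connected temporal graph on $n$ vertices, and let $T$ be a spanning tree of the underlying graph of $\mathcal{G}$. If $\mathcal{G}$ contains at least $\lceil 18k \ln(6k) \rceil\left(\Delta+ \frac{n}{k}\right)$ snapshots that are $k$-edge-deficient with respect to $T$, then $\mathcal{G}$ can be explored from any vertex.
   Context: A temporal graph $\mathcal{G}$ is an ordered sequence $\langle G_1,\dots,G_L\rangle$ of graphs on a common vertex set; the $G_i$ are its snapshots and $L$ is its lifetime. Its underlying graph is the static graph on the same vertex set whose edges are those appearing in at least one snapshot. For $1\le t\le t'\le L$, $\mathcal{G}_{[t,t']}=\langle G_t,\dots,G_{t'}\rangle$. A temporal walk from $v$ to $u$ is a sequence $(v=v_0,e_1,v_1,\dots,e_\ell,v_\ell=u)$ with strictly increasing time steps $1\le t_1<\dots<t_\ell\le L$ such that each edge $e_i=\{v_{i-1},v_i\}$ is present in $G_{t_i}$; its length is $\ell$. $\mathcal{G}$ can be explored from $v$ in at most $\ell$ steps if there is a temporal walk of length at most $\ell$ starting at $v$ and visiting all vertices; it can be explored from $v$ if it can be explored from $v$ in at most $L$ steps. $\mathcal{G}$ is temporally connected if for every ordered pair of vertices $(v,u)$ there is a temporal walk from $v$ to $u$; it is $\Delta$-temporally connected if $\mathcal{G}_{[t,t+\Delta-1]}$ is temporally connected for every $t\in[L-\Delta+1]$. For a static graph $F$ on the same vertex set, a snapshot $G$ is $k$-edge-deficient with respect to $F$ if all but at most $k$ edges of $F$ are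 present in $G$. *)

theory Defs
  imports Complex_Main
begin

definition temporal_graph :: "'a set \<Rightarrow> nat \<Rightarrow> (nat \<Rightarrow> 'a set set) \<Rightarrow> bool" where
  "temporal_graph V L E \<longleftrightarrow> finite V \<and>
     (\<forall>i\<in>{1..L}. \<forall>e\<in>E i. e \<subseteq> V \<and> card e = 2)"

definition underlying_edges :: "nat \<Rightarrow> (nat \<Rightarrow> 'a set set) \<Rightarrow> 'a set set" where
  "underlying_edges L E = (\<Union>i\<in>{1..L}. E i)"

definition temporal_walk ::
  "(nat \<Rightarrow> 'a set set) \<Rightarrow> nat \<Rightarrow> nat \<Rightarrow> 'a list \<Rightarrow> nat list \<Rightarrow> bool" where
  "temporal_walk E a b vs ts \<longleftrightarrow> vs \<noteq> [] \<and> length vs = length ts + 1 \<and>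
     sorted_wrt (<) ts \<and> (\<forall>t\<in>set ts. a \<le> t \<and> t \<le> b) \<and>
     (\<forall>i<length ts. {vs ! i, vs ! Suc i} \<in> E (ts ! i))"

definition temporally_connected_on ::
  "'a set \<Rightarrow> (nat \<Rightarrow> 'a set set) \<Rightarrow> nat \<Rightarrow> nat \<Rightarrow> bool" where
  "temporally_connected_on V E a b \<longleftrightarrow>
     (\<forall>v\<in>V. \<forall>u\<in>V. \<exists>vs ts. temporal_walk E a b vs ts \<and> hd vs = v \<and> last vs = u)"

definition delta_temporally_connected ::
  "nat \<Rightarrow> 'a set \<Rightarrow> nat \<Rightarrow> (nat \<Rightarrow> 'a set set) \<Rightarrow> bool" where
  "delta_temporally_connected \<Delta> V L E \<longleftrightarrow>
     (\<forall>t. 1 \<le> t \<and> t + \<Delta> \<le> L + 1 \<longrightarrow> temporally_connected_on V E t (t + \<Delta> - 1))"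

definition graph_connected :: "'a set \<Rightarrow> 'a set set \<Rightarrow> bool" where
  "graph_connected V F \<longleftrightarrow>
     (\<forall>u\<in>V. \<forall>v\<in>V. (u, v) \<in> ({(x, y). {x, y} \<in> F})\<^sup>*)"

text \<open>A tree on V: a connected graph on V in which no edge lies on a cycle,
  i.e. removing any edge disconnects its endpoints (acyclicity).\<close>

definition is_tree :: "'a set \<Rightarrow> 'a set set \<Rightarrow> bool" where
  "is_tree V F \<longleftrightarrow> V \<noteq> {} \<and> (\<forall>e\<in>F. e \<subseteq> V \<and> card e = 2) \<and> graph_connected V F \<and>
     (\<forall>x y. {x, y} \<in> F \<longrightarrow> (x, y) \<notin> ({(a, b). {a, b} \<in> F - {{x, y}}})\<^sup>*)"

definition spanning_tree_of :: "'a set \<Rightarrow> 'a set set \<Rightarrow> 'a set set \<Rightarrow> bool" where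
  "spanning_tree_of V H T \<longleftrightarrow> T \<subseteq> H \<and> is_tree V T"

definition edge_deficient :: "nat \<Rightarrow> 'a set set \<Rightarrow> 'a set set \<Rightarrow> bool" where
  "edge_deficient k F G \<longleftrightarrow> card (F - G) \<le> k"

definition explorable_from :: "'a set \<Rightarrow> nat \<Rightarrow> (nat \<Rightarrow> 'a set set) \<Rightarrow> 'a \<Rightarrow> bool" where
  "explorable_from V L E v \<longleftrightarrow>
     (\<exists>vs ts. temporal_walk E 1 L vs ts \<and> hd vs = v \<and> set vs = V \<and> length ts \<le> L)"

end

theory Submission
  imports Defs "HOL-Library.Infinite_Set"
begin

text \<open>Let \<open>w\<close> be the walk of a depth-first search around the spanning tree \<open>T\<close>: it has
  \<open>2 n - 2\<close> steps and uses every tree edge at most twice, so a \<open>k\<close>-edge-deficient snapshot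
  blocks at most \<open>2 k\<close> of its steps. Put \<open>W = \<lfloor>n / k\<rfloor> + 1\<close> and split \<open>4 k (\<Delta> + W)\<close>
  deficient snapshots into \<open>4 k\<close> rounds of \<open>\<Delta> + W\<close> consecutive ones. In each round the
  explorer first uses the \<open>\<Delta>\<close> time steps starting at the first snapshot of the round, in
  which the graph is temporally connected, to move to a chosen position of \<open>w\<close>; then it
  follows \<open>w\<close> through the last \<open>W\<close> snapshots of the round, crossing the next edge of \<open>w\<close>
  whenever it is present. If walkers started in one round at the points of a set \<open>X\<close> cover
  disjoint segments of \<open>w\<close> and none of them reaches its end, counting their stalls and their
  progress gives \<open>(W + 1) |X| \<le> 2 k W + 2 n - 2 < 4 k W\<close>, so \<open>|X| < 4 k\<close>. Hence choosing
  the starting positions greedily, the segments of the \<open>4 k\<close> rounds cover all of \<open>w\<close>.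
  The hypothesis on the number of deficient snapshots is only used through
  \<open>4 k (\<Delta> + W) \<le> 18 k \<Delta> + 18 n\<close>.\<close>

section \<open>Journeys\<close>

text \<open>\<open>journey E u s z t S\<close>: a temporal walk from \<open>u\<close> to \<open>z\<close> whose time steps lie in
  \<open>{s<..t}\<close> and whose vertex set is \<open>S\<close>.\<close>

inductive journey :: "(nat \<Rightarrow> 'a set set) \<Rightarrow> 'a \<Rightarrow> nat \<Rightarrow> 'a \<Rightarrow> nat \<Rightarrow> 'a set \<Rightarrow> bool"
  for E where
  journey_refl: "s \<le> t \<Longrightarrow> journey E u s u t {u}"
| journey_snoc: "journey E u s z t S \<Longrightarrow> {z, y} \<in> E t' \<Longrightarrow> t < t' \<Longrightarrow> t' \<le> t'' \<Longrightarrow>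
    journey E u s y t'' (insert y S)"

lemma journey_le: "journey E u s z t S \<Longrightarrow> s \<le> t"
  by (induction rule: journey.induct) auto

lemma journey_end_in: "journey E u s z t S \<Longrightarrow> z \<in> S"
  by (induction rule: journey.induct) auto

lemma journey_mono_end: "journey E u s z t S \<Longrightarrow> t \<le> t' \<Longrightarrow> journey E u s z t' S"
  by (cases rule: journey.cases) (auto intro: journey.intros)

lemma journey_mono_start: "journey E u s z t S \<Longrightarrow> s' \<le> s \<Longrightarrow> journey E u s' z t S"
  by (induction rule: journey.induct) (auto intro: journey.intros)

lemma journey_trans:
  assumes "journey E u s z t S" and "journey E z t y t' S'"
  shows "journey E u s y t' (S \<union> S')"
  using assms(2,1)
proof induction
  case journey_refl
  then show ?case
    by (metis journey_mono_end journey_end_in insert_absorb Un_insert_right sup_bot.right_neutral)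
next
  case journey_snoc
  then show ?case by (auto intro: journey.journey_snoc)
qed

lemma journey_imp_temporal_walk:
  assumes "journey E u s z t S"
  shows "\<exists>vs ts. temporal_walk E (Suc s) t vs ts \<and> hd vs = u \<and> last vs = z \<and> set vs = S"
  using assms
proof induction
  case (journey_refl s t u)
  show ?case by (intro exI[of _ "[u]"] exI[of _ "[]"]) (auto simp: temporal_walk_def)
next
  case (journey_snoc u s z t S y t' t'')
  then obtain vs ts where w: "temporal_walk E (Suc s) t vs ts" "hd vs = u" "last vs = z"
    "set vs = S" by blast
  have len: "length vs = length ts + 1" "vs \<noteq> []" using w(1) by (auto simp: temporal_walk_def)
  have "vs ! length ts = z" using w(3) len by (simp add: last_conv_nth)
  then have "temporal_walk E (Suc s) t'' (vs @ [y]) (ts @ [t'])"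
    using w(1) len journey_snoc.hyps journey_le[OF journey_snoc.hyps(1)]
    by (fastforce simp: temporal_walk_def sorted_wrt_append nth_append less_Suc_eq)
  then show ?case using w len by (intro exI[of _ "vs @ [y]"] exI[of _ "ts @ [t']"]) auto
qed

lemma temporal_walk_imp_journey:
  assumes walk: "temporal_walk E a b vs ts" and "1 \<le> a" and "a \<le> Suc b"
  shows "journey E (hd vs) (a - 1) (last vs) b (set vs)"
proof -
  have len: "length vs = length ts + 1" "vs \<noteq> []" and sorted: "sorted_wrt (<) ts"
    and range: "\<forall>t\<in>set ts. a \<le> t \<and> t \<le> b"
    and edges: "\<forall>i<length ts. {vs ! i, vs ! Suc i} \<in> E (ts ! i)"
    using walk by (auto simp: temporal_walk_def)
  let ?time = "\<lambda>j. if j = 0 then a - 1 else ts ! (j - 1)"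
  have prefix: "journey E (hd vs) (a - 1) (vs ! j) (?time j) (set (take (Suc j) vs))"
    if "j \<le> length ts" for j
    using that
  proof (induction j)
    case 0
    then show ?case using len by (auto simp: hd_conv_nth take_Suc intro: journey_refl)
  next
    case (Suc j)
    have j: "j < length ts" using Suc by simp
    have "?time j < ts ! j"
      using j \<open>1 \<le> a\<close> range nth_mem[OF j] sorted_wrt_nth_less[OF sorted, of "j - 1" j]
      by (cases "j = 0") fastforce+
    moreover have "set (take (Suc (Suc j)) vs) = insert (vs ! Suc j) (set (take (Suc j) vs))"
      using len j by (simp add: take_Suc_conv_app_nth insert_commute)
    ultimately show ?case
      using journey_snoc[OF Suc.IH edges[rule_format, OF j]] Suc.prems by simp
  qed
  have "?time (length ts) \<le> b"
    using range \<open>a \<le> Suc b\<close> by (cases "ts = []") (auto simp: last_conv_nth[symmetric])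
  then show ?thesis
    using journey_mono_end[OF prefix[OF order.refl]] len by (simp add: last_conv_nth)
qed

lemma journey_in_window:
  assumes "delta_temporally_connected \<Delta> V L E" and "1 \<le> t" and "t + \<Delta> \<le> L + 1"
    and "s < t" and "u \<in> V" and "z \<in> V"
  shows "\<exists>S. journey E u s z (t + \<Delta> - 1) S"
proof -
  obtain vs ts where walk: "temporal_walk E t (t + \<Delta> - 1) vs ts" "hd vs = u" "last vs = z"
    using assms(1-3,5,6) unfolding delta_temporally_connected_def temporally_connected_on_def
    by blast
  have "journey E u (t - 1) z (t + \<Delta> - 1) (set vs)"
    using temporal_walk_imp_journey[OF walk(1) \<open>1 \<le> t\<close>] walk(2,3) by simp
  then have "journey E u s z (t + \<Delta> - 1) (set vs)"
    by (rule journey_mono_start) (use \<open>s < t\<close> in simp)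
  then show ?thesis ..
qed

lemma temporal_walk_set_subset:
  assumes "temporal_graph V L E" and "temporal_walk E 1 L vs ts" and "hd vs \<in> V"
  shows "set vs \<subseteq> V"
proof
  fix y assume "y \<in> set vs"
  then obtain i where i: "i < length vs" "vs ! i = y" by (meson in_set_conv_nth)
  have len: "length vs = length ts + 1" "vs \<noteq> []" using assms(2) by (auto simp: temporal_walk_def)
  show "y \<in> V"
  proof (cases i)
    case 0
    then show ?thesis using i assms(3) len by (simp add: hd_conv_nth)
  next
    case (Suc j)
    then have j: "j < length ts" using i len by simp
    then have "{vs ! j, y} \<in> E (ts ! j)" "ts ! j \<in> {1..L}"
      using assms(2) Suc i nth_mem[OF j] by (auto simp: temporal_walk_def)
    then show ?thesis using assms(1) unfolding temporal_graph_def by blast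
  qed
qed

lemma temporal_walk_length_le:
  assumes "temporal_walk E 1 L vs ts"
  shows "length ts \<le> L"
proof -
  have "distinct ts" and "set ts \<subseteq> {1..L}"
    using assms by (auto simp: temporal_walk_def strict_sorted_iff)
  then show ?thesis using card_mono[of "{1..L}" "set ts"] distinct_card by fastforce
qed

section \<open>Tours of a tree\<close>

fun edges_of :: "'a list \<Rightarrow> 'a set list" where
  "edges_of (x # y # zs) = {x, y} # edges_of (y # zs)"
| "edges_of _ = []"

lemma edges_of_append: "edges_of (xs @ a # ys) = edges_of (xs @ [a]) @ edges_of (a # ys)"
proof (induction xs)
  case (Cons x xs)
  then show ?case by (cases xs) auto
qed simp

lemma length_edges_of: "length (edges_of w) = length w - 1"
  by (induction w rule: edges_of.induct) auto

lemma nth_edges_of: "p < length w - 1 \<Longrightarrow> edges_of w ! p = {w ! p, w ! Suc p}"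
proof (induction w arbitrary: p rule: edges_of.induct)
  case (1 x y zs)
  then show ?case by (cases p) auto
qed auto

lemma edges_of_subset: "e \<in> set (edges_of w) \<Longrightarrow> e \<subseteq> set w"
  by (induction w rule: edges_of.induct) auto

text \<open>Modelled on the walk of a depth-first search around \<open>T\<close>.\<close>

definition tree_tour :: "'a set set \<Rightarrow> 'a set \<Rightarrow> 'a list \<Rightarrow> bool" where
  "tree_tour T S w \<longleftrightarrow> set w = S \<and> length w = 2 * card S - 1 \<and> set (edges_of w) \<subseteq> T
     \<and> (\<forall>e. count_list (edges_of w) e \<le> 2)"

lemma tree_tour_insert:
  assumes tour: "tree_tour T S w" and "finite S" and "a \<in> S" and "b \<notin> S" and "{a, b} \<in> T"
  shows "\<exists>w'. tree_tour T (insert b S) w'"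
proof -
  have "a \<in> set w" using tour \<open>a \<in> S\<close> by (simp add: tree_tour_def)
  then obtain xs ys where w: "w = xs @ a # ys" by (meson split_list)
  let ?w' = "xs @ a # b # a # ys"
  have edges: "edges_of w = edges_of (xs @ [a]) @ edges_of (a # ys)"
    "edges_of ?w' = edges_of (xs @ [a]) @ {a, b} # {a, b} # edges_of (a # ys)"
    using w edges_of_append[of xs a ys] edges_of_append[of xs a "b # a # ys"]
    by (simp_all add: insert_commute)
  have "{a, b} \<notin> set (edges_of w)"
    using edges_of_subset tour \<open>b \<notin> S\<close> by (fastforce simp: tree_tour_def)
  then have "count_list (edges_of ?w') e \<le> 2" for e
    using tour edges by (cases "e = {a, b}") (simp_all add: tree_tour_def count_list_0_iff)
  moreover have "set ?w' = insert b S" "length ?w' = 2 * card (insert b S) - 1"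
    using tour w \<open>finite S\<close> \<open>b \<notin> S\<close> by (auto simp: tree_tour_def)
  moreover have "set (edges_of ?w') \<subseteq> T"
    using tour edges(1,2) \<open>{a, b} \<in> T\<close> by (simp add: tree_tour_def)
  ultimately have "tree_tour T (insert b S) ?w'" by (simp add: tree_tour_def)
  then show ?thesis ..
qed

lemma rtrancl_leaves_set:
  assumes "(x, y) \<in> R\<^sup>*" and "x \<in> S" and "y \<notin> S"
  shows "\<exists>a b. a \<in> S \<and> b \<notin> S \<and> (a, b) \<in> R"
  using assms by (induction rule: rtrancl_induct) auto

lemma tree_tour_exists:
  assumes "finite V" and "V \<noteq> {}" and conn: "graph_connected V T"
    and edges: "\<forall>e\<in>T. e \<subseteq> V"
  shows "\<exists>w. tree_tour T V w"
proof -
  obtain v where v: "v \<in> V" using \<open>V \<noteq> {}\<close> by blast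
  have "\<exists>S w. S \<subseteq> V \<and> card S = Suc d \<and> tree_tour T S w" if "d < card V" for d
    using that
  proof (induction d)
    case 0
    have "tree_tour T {v} [v]" by (simp add: tree_tour_def)
    then show ?case using v by (intro exI[of _ "{v}"]) auto
  next
    case (Suc d)
    then obtain S w where S: "S \<subseteq> V" "card S = Suc d" "tree_tour T S w" by auto
    have "finite S" using S(1) \<open>finite V\<close> finite_subset by blast
    have "S \<noteq> V" "S \<noteq> {}" using S(2) Suc.prems by auto
    then obtain x y where "x \<in> S" "y \<in> V - S" using S(1) by blast
    then have "(x, y) \<in> {(x, y). {x, y} \<in> T}\<^sup>*" using conn S(1) by (auto simp: graph_connected_def)
    from rtrancl_leaves_set[OF this \<open>x \<in> S\<close>] \<open>y \<in> V - S\<close>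
    obtain a b where ab: "a \<in> S" "b \<notin> S" "{a, b} \<in> T" by auto
    then obtain w' where "tree_tour T (insert b S) w'"
      using tree_tour_insert[OF S(3) \<open>finite S\<close>] by blast
    moreover have "insert b S \<subseteq> V" using S(1) ab(3) edges by blast
    moreover have "card (insert b S) = Suc (Suc d)" using S(2) ab(2) \<open>finite S\<close> by simp
    ultimately show ?case by blast
  qed
  from this[of "card V - 1"] obtain S w where "S \<subseteq> V" "card S = card V" "tree_tour T S w"
    using assms(1,2) by (auto simp: card_gt_0_iff)
  moreover from this have "S = V" using card_subset_eq[OF assms(1)] by blast
  ultimately show ?thesis by blast
qed

section \<open>Walkers following a tour\<close>

fun tour_pos :: "(nat \<Rightarrow> 'a set set) \<Rightarrow> 'a list \<Rightarrow> (nat \<Rightarrow> nat) \<Rightarrow> nat \<Rightarrow> nat \<Rightarrow> nat" where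
  "tour_pos E w tm x 0 = x"
| "tour_pos E w tm x (Suc j) = (if tour_pos E w tm x j < length w - 1 \<and>
      {w ! tour_pos E w tm x j, w ! Suc (tour_pos E w tm x j)} \<in> E (tm j)
    then Suc (tour_pos E w tm x j) else tour_pos E w tm x j)"

lemma tour_pos_mono: "j \<le> j' \<Longrightarrow> tour_pos E w tm x j \<le> tour_pos E w tm x j'"
  by (rule lift_Suc_mono_le[of "tour_pos E w tm x"]) auto

lemma tour_pos_ge: "x \<le> tour_pos E w tm x j"
  using tour_pos_mono[of 0 j] by simp

lemma tour_pos_le_length: "x \<le> length w - 1 \<Longrightarrow> tour_pos E w tm x j \<le> length w - 1"
  by (induction j) auto

lemma tour_pos_progress_plus_stalls:
  assumes "tour_pos E w tm x W < length w - 1"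
  shows "(tour_pos E w tm x W - x) + card {j. j < W \<and> edges_of w ! tour_pos E w tm x j \<notin> E (tm j)}
    = W"
  using assms
proof (induction W)
  case (Suc W)
  let ?p = "tour_pos E w tm x W"
  let ?stalls = "\<lambda>W. {j. j < W \<and> edges_of w ! tour_pos E w tm x j \<notin> E (tm j)}"
  have "?p < length w - 1" using Suc.prems tour_pos_mono[of W "Suc W" E w tm x] by simp
  then have edge: "edges_of w ! ?p = {w ! ?p, w ! Suc ?p}" by (rule nth_edges_of)
  have "?stalls (Suc W) = (if edges_of w ! ?p \<in> E (tm W) then ?stalls W else insert W (?stalls W))"
    by (auto simp: less_Suc_eq)
  then show ?case
    using Suc \<open>?p < length w - 1\<close> edge tour_pos_ge[of x E w tm W] by (auto split: if_splits)
qed simp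

lemma card_blocked_positions:
  assumes "tree_tour T S w" and "finite T" and "card (T - G) \<le> k"
  shows "card {p. p < length w - 1 \<and> edges_of w ! p \<notin> G} \<le> 2 * k"
proof -
  let ?at = "\<lambda>e. {p. p < length w - 1 \<and> edges_of w ! p = e}"
  have "card (?at e) = count_list (edges_of w) e" for e
    by (simp add: count_list_eq_length_filter length_filter_conv_card length_edges_of eq_commute)
  then have at_le: "card (?at e) \<le> 2" for e
    using assms(1) by (simp add: tree_tour_def)
  have "{p. p < length w - 1 \<and> edges_of w ! p \<notin> G} \<subseteq> (\<Union>e\<in>T - G. ?at e)"
    using assms(1) nth_mem[of _ "edges_of w"] by (fastforce simp: tree_tour_def length_edges_of)
  then have "card {p. p < length w - 1 \<and> edges_of w ! p \<notin> G} \<le> card (\<Union>e\<in>T - G. ?at e)"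
    using assms(2) by (intro card_mono) auto
  also have "\<dots> \<le> (\<Sum>e\<in>T - G. card (?at e))"
    using assms(2) by (intro card_UN_le) auto
  also have "\<dots> \<le> 2 * card (T - G)"
    using sum_bounded_above[of "T - G" "\<lambda>e. card (?at e)" 2] at_le by simp
  finally show ?thesis using assms(3) by linarith
qed

definition disjoint_segments :: "(nat \<Rightarrow> nat) \<Rightarrow> nat set \<Rightarrow> bool" where
  "disjoint_segments f X \<longleftrightarrow> (\<forall>h\<in>X. \<forall>h'\<in>X. h < h' \<longrightarrow> f h < h')"

lemma disjoint_segments_insert:
  assumes "disjoint_segments f X" and "\<And>h. h \<le> f h" and "\<forall>h\<in>X. f h < x"
  shows "disjoint_segments f (insert x X)"
  using assms le_less_trans unfolding disjoint_segments_def
  by (metis insert_iff not_less_iff_gr_or_eq)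

lemma sum_disjoint_segments_le:
  assumes "disjoint_segments f X" and "\<And>h. h \<le> f h" and "\<forall>h\<in>X. f h < N"
  shows "(\<Sum>h\<in>X. f h - h) + card X \<le> N"
proof -
  have "finite X" using assms(2,3) by (meson finite_nat_set_iff_bounded le_less_trans)
  have "(\<Sum>h\<in>X. f h - h) + card X = (\<Sum>h\<in>X. f h - h + 1)"
    by (simp only: sum.distrib card_eq_sum)
  also have "\<dots> = (\<Sum>h\<in>X. card {h..f h})"
    using assms(2) by (intro sum.cong) (auto simp: Suc_diff_le)
  also have "\<dots> = card (\<Union>h\<in>X. {h..f h})"
    using assms(1) \<open>finite X\<close> unfolding disjoint_segments_def
    by (intro card_UN_disjoint[symmetric]) (auto, metis linorder_neqE_nat le_less_trans not_le)
  also have "\<dots> \<le> card {..<N}"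
    using assms(3) by (intro card_mono) auto
  finally show ?thesis by simp
qed

lemma card_blocked_walkers:
  assumes "tree_tour T S w" and "finite T" and "card (T - E (tm j)) \<le> k" and "j \<le> W"
    and disjoint: "disjoint_segments (\<lambda>h. tour_pos E w tm h W) X"
    and unfinished: "\<forall>h\<in>X. tour_pos E w tm h W < length w - 1"
  shows "card {h\<in>X. edges_of w ! tour_pos E w tm h j \<notin> E (tm j)} \<le> 2 * k"
proof -
  let ?pos = "\<lambda>h. tour_pos E w tm h j"
  let ?blocked = "{h\<in>X. edges_of w ! ?pos h \<notin> E (tm j)}"
  have "strict_mono_on X ?pos"
  proof (rule strict_mono_onI)
    fix h h' assume "h \<in> X" "h' \<in> X" "h < h'"
    then have "tour_pos E w tm h W < h'" using disjoint by (simp add: disjoint_segments_def)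
    then show "?pos h < ?pos h'"
      using tour_pos_mono[OF \<open>j \<le> W\<close>, of E w tm h] tour_pos_ge[of h' E w tm j] by linarith
  qed
  then have "card ?blocked = card (?pos ` ?blocked)"
    by (intro card_image[symmetric] inj_on_subset[OF strict_mono_on_imp_inj_on]) auto
  also have "\<dots> \<le> card {p. p < length w - 1 \<and> edges_of w ! p \<notin> E (tm j)}"
    using unfinished tour_pos_mono[OF \<open>j \<le> W\<close>, of E w tm]
    by (intro card_mono) (auto intro: le_less_trans)
  also have "\<dots> \<le> 2 * k"
    using card_blocked_positions assms(1-3) by blast
  finally show ?thesis .
qed

lemma card_unfinished_walkers:
  assumes "tree_tour T S w" and "finite T" and "\<forall>j<W. card (T - E (tm j)) \<le> k"
    and disjoint: "disjoint_segments (\<lambda>h. tour_pos E w tm h W) X"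
    and unfinished: "\<forall>h\<in>X. tour_pos E w tm h W < length w - 1"
  shows "(W + 1) * card X \<le> 2 * k * W + (length w - 1)"
proof -
  let ?pos = "\<lambda>h. tour_pos E w tm h W"
  let ?blocked = "\<lambda>h j. edges_of w ! tour_pos E w tm h j \<notin> E (tm j)"
  have "finite X"
    using unfinished tour_pos_ge by (meson finite_nat_set_iff_bounded le_less_trans)
  have "(\<Sum>h\<in>X. card {j. j < W \<and> ?blocked h j}) = (\<Sum>j<W. card {h\<in>X. ?blocked h j})"
    using sum.swap_restrict[OF \<open>finite X\<close> finite_lessThan[of W], of "\<lambda>_ _. 1::nat" ?blocked]
    by simp
  also have "\<dots> \<le> (\<Sum>j<W. 2 * k)"
    using card_blocked_walkers[OF assms(1,2) _ _ disjoint unfinished] assms(3)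
    by (intro sum_mono) simp
  finally have stalls: "(\<Sum>h\<in>X. card {j. j < W \<and> ?blocked h j}) \<le> 2 * k * W"
    by (simp add: mult.commute)
  have progress: "(\<Sum>h\<in>X. ?pos h - h) + card X \<le> length w - 1"
    using sum_disjoint_segments_le[OF disjoint tour_pos_ge unfinished] .
  have "W * card X = (\<Sum>h\<in>X. W)" by simp
  also have "\<dots> = (\<Sum>h\<in>X. (?pos h - h) + card {j. j < W \<and> ?blocked h j})"
    using unfinished by (intro sum.cong refl tour_pos_progress_plus_stalls[symmetric]) blast
  also have "\<dots> = (\<Sum>h\<in>X. ?pos h - h) + (\<Sum>h\<in>X. card {j. j < W \<and> ?blocked h j})"
    by (rule sum.distrib)
  finally show ?thesis using stalls progress by simp
qed

section \<open>Covering the tour greedily\<close>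

definition segments_cover :: "('r \<Rightarrow> nat \<Rightarrow> nat) \<Rightarrow> 'r set \<Rightarrow> ('r \<Rightarrow> nat) \<Rightarrow> nat \<Rightarrow> nat \<Rightarrow> bool" where
  "segments_cover F A st x N \<longleftrightarrow> (\<forall>p. x \<le> p \<and> p \<le> N \<longrightarrow> (\<exists>r\<in>A. st r \<le> p \<and> p \<le> F r (st r)))"

lemma segments_cover_update:
  assumes "r0 \<in> A" and "segments_cover F (A - {r0}) st (Suc (F r0 x)) N"
  shows "segments_cover F A (st(r0 := x)) x N"
  unfolding segments_cover_def
proof (intro allI impI)
  fix p assume p: "x \<le> p \<and> p \<le> N"
  show "\<exists>r\<in>A. (st(r0 := x)) r \<le> p \<and> p \<le> F r ((st(r0 := x)) r)"
  proof (cases "p \<le> F r0 x")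
    case True
    then show ?thesis using assms(1) p by (intro bexI[of _ r0]) auto
  next
    case False
    then obtain r where "r \<in> A - {r0}" "st r \<le> p \<and> p \<le> F r (st r)"
      using assms(2) p unfolding segments_cover_def by (meson not_less_eq_eq)
    then show ?thesis by (intro bexI[of _ r]) auto
  qed
qed

text \<open>Greedy covering: the uncovered suffix of \<open>{0..N}\<close> starts at \<open>x\<close>, and it is assigned to
  the round whose segment from \<open>x\<close> reaches furthest. The points \<open>H\<close> chosen so far stay
  disjoint segment starts for all remaining rounds, so if the rounds run out before \<open>N\<close> is
  reached, the last round has \<open>card H + card A\<close> disjoint unfinished segments.\<close>

lemma greedy_segment_cover:
  fixes F :: "'r \<Rightarrow> nat \<Rightarrow> nat"
  assumes F_ge: "\<And>r y. y \<le> F r y"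
    and few: "\<And>r X. r \<in> A \<Longrightarrow> disjoint_segments (F r) X \<Longrightarrow> \<forall>h\<in>X. F r h < N \<Longrightarrow>
      card X < card H + card A"
    and "finite A" and "A \<noteq> {}"
    and below: "\<forall>r\<in>A. \<forall>h\<in>H. F r h < x"
    and disjoint: "\<forall>r\<in>A. disjoint_segments (F r) H"
  shows "\<exists>st. (\<forall>r. st r \<le> N) \<and> segments_cover F A st x N"
  using assms(2-)
proof (induction "card A" arbitrary: A H x rule: less_induct)
  case less
  have "Max ((\<lambda>r. F r x) ` A) \<in> (\<lambda>r. F r x) ` A" using less.prems(2,3) by simp
  then obtain r0 where r0: "r0 \<in> A" "F r0 x = Max ((\<lambda>r. F r x) ` A)" by auto
  then have furthest: "\<forall>r\<in>A. F r x \<le> F r0 x" using less.prems(2) by simp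
  show ?case
  proof (cases "N < x \<or> N \<le> F r0 x")
    case True
    then show ?thesis
      using r0(1) by (intro exI[of _ "\<lambda>_. min x N"])
        (auto simp: segments_cover_def intro!: bexI[of _ r0])
  next
    case False
    then have "x \<le> N" and "F r0 x < N" by auto
    let ?H = "insert x H"
    have H_below: "\<forall>h\<in>H. h < x" using less.prems(4) r0(1) F_ge le_less_trans by blast
    then have "finite H" "x \<notin> H" by (auto simp: finite_nat_set_iff_bounded)
    then have card_H: "card ?H = Suc (card H)" by simp
    have disjoint': "\<forall>r\<in>A. disjoint_segments (F r) ?H"
      using less.prems(4,5) disjoint_segments_insert F_ge by blast
    show ?thesis
    proof (cases "A = {r0}")
      case True
      have "\<forall>h\<in>?H. F r0 h < N"
        using \<open>F r0 x < N\<close> \<open>x \<le> N\<close> less.prems(4) r0(1) by (auto intro: less_le_trans)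
      then have "card ?H < card H + card A" using less.prems(1) r0(1) disjoint' by blast
      then show ?thesis using card_H True by simp
    next
      case False
      let ?A = "A - {r0}"
      have "card ?A < card A" using r0(1) less.prems(2) by (meson card_Diff1_less)
      moreover have "card X < card ?H + card ?A"
        if "r \<in> ?A" "disjoint_segments (F r) X" "\<forall>h\<in>X. F r h < N" for r X
        using less.prems(1) that card_H r0(1) less.prems(2) card_gt_0_iff[of A]
        by (auto simp: card_Diff_singleton)
      moreover have "finite ?A" "?A \<noteq> {}" using less.prems(2) False r0(1) by auto
      moreover have "\<forall>r\<in>?A. \<forall>h\<in>?H. F r h < Suc (F r0 x)"
        using furthest less.prems(4) F_ge[of x r0] by (fastforce simp: less_Suc_eq_le)
      moreover have "\<forall>r\<in>?A. disjoint_segments (F r) ?H" using disjoint' by blast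
      ultimately obtain st where "\<forall>r. st r \<le> N" "segments_cover F ?A st (Suc (F r0 x)) N"
        using less.hyps[of ?A ?H "Suc (F r0 x)"] by blast
      then show ?thesis
        using segments_cover_update[OF r0(1)] \<open>x \<le> N\<close> by (intro exI[of _ "st(r0 := x)"]) simp
    qed
  qed
qed

lemma tree_tour_covering_rounds:
  assumes tour: "tree_tour T V w" and "finite T" and "V \<noteq> {}" and "card V < k * W"
    and deficient: "\<forall>r<4 * k. \<forall>j<W. card (T - E (tm r j)) \<le> k"
  shows "\<exists>st. (\<forall>r. st r < length w) \<and>
    segments_cover (\<lambda>r x. tour_pos E w (tm r) x W) {..<4 * k} st 0 (length w - 1)"
proof -
  let ?F = "\<lambda>r x. tour_pos E w (tm r) x W"
  have "length w - 1 < 2 * k * W" and "w \<noteq> []" and "0 < k"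
    using tour assms(3,4) by (auto simp: tree_tour_def)
  have few: "card X < card {} + card {..<4 * k}"
    if "r \<in> {..<4 * k}" and "disjoint_segments (?F r) X" and "\<forall>h\<in>X. ?F r h < length w - 1"
    for r X
  proof -
    have "(W + 1) * card X \<le> 2 * k * W + (length w - 1)"
      using card_unfinished_walkers[OF tour \<open>finite T\<close> _ that(2,3)] deficient that(1) by simp
    also have "\<dots> < (W + 1) * (4 * k)"
      using \<open>length w - 1 < 2 * k * W\<close> by (simp add: algebra_simps)
    finally show ?thesis by (simp only: mult_less_cancel1) simp
  qed
  have "\<exists>st. (\<forall>r. st r \<le> length w - 1) \<and> segments_cover ?F {..<4 * k} st 0 (length w - 1)"
    by (intro greedy_segment_cover[where H = "{}"] tour_pos_ge few)
      (use \<open>0 < k\<close> in \<open>auto simp: disjoint_segments_def lessThan_empty_iff\<close>)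
  then obtain st where "\<forall>r. st r \<le> length w - 1" "segments_cover ?F {..<4 * k} st 0 (length w - 1)"
    by blast
  moreover have "\<forall>r. st r < length w" using calculation(1) \<open>w \<noteq> []\<close> le_less_trans by fastforce
  ultimately show ?thesis by blast
qed

section \<open>Exploration in rounds\<close>

lemma strict_mono_on_add_le:
  fixes g :: "nat \<Rightarrow> nat"
  assumes "strict_mono_on {..<M} g" and "i + d < M"
  shows "g i + d \<le> g (i + d)"
  using assms(2)
proof (induction d)
  case (Suc d)
  then have "g (i + d) < g (i + Suc d)" using strict_mono_onD[OF assms(1)] by simp
  then show ?case using Suc by simp
qed simp

lemma journey_along_tour:
  assumes "strict_mono_on {..<W} tm" and "s < tm 0" and "j \<le> W"
  shows "\<exists>S. journey E (w ! x) s (w ! tour_pos E w tm x j) (if j = 0 then s else tm (j - 1)) S \<and>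
    (\<forall>p. x \<le> p \<and> p \<le> tour_pos E w tm x j \<longrightarrow> w ! p \<in> S)"
  using assms(3)
proof (induction j)
  case 0
  then show ?case by (auto intro: journey_refl)
next
  case (Suc j)
  let ?p = "tour_pos E w tm x j"
  obtain S where S: "journey E (w ! x) s (w ! ?p) (if j = 0 then s else tm (j - 1)) S"
    "\<forall>p. x \<le> p \<and> p \<le> ?p \<longrightarrow> w ! p \<in> S"
    using Suc by auto
  have before: "(if j = 0 then s else tm (j - 1)) < tm j"
    using Suc.prems assms(2) strict_mono_onD[OF assms(1)] by auto
  show ?case
  proof (cases "?p < length w - 1 \<and> {w ! ?p, w ! Suc ?p} \<in> E (tm j)")
    case True
    then have "journey E (w ! x) s (w ! Suc ?p) (tm j) (insert (w ! Suc ?p) S)"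
      using journey_snoc[OF S(1) _ before order.refl] by simp
    then show ?thesis using True S(2) by (auto simp: le_Suc_eq)
  next
    case False
    then show ?thesis using journey_mono_end[OF S(1) less_imp_le[OF before]] S(2) by auto
  qed
qed

lemma journey_round:
  assumes "delta_temporally_connected \<Delta> V L E" and "1 \<le> t" and "t + \<Delta> \<le> L + 1"
    and "s < t" and "u \<in> V" and "w ! x \<in> V"
    and "strict_mono_on {..<W} tm" and "t + \<Delta> - 1 < tm 0" and "1 \<le> W"
  shows "\<exists>S. journey E u s (w ! tour_pos E w tm x W) (tm (W - 1)) S \<and>
    (\<forall>p. x \<le> p \<and> p \<le> tour_pos E w tm x W \<longrightarrow> w ! p \<in> S)"
proof -
  obtain S where to_start: "journey E u s (w ! x) (t + \<Delta> - 1) S"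
    using journey_in_window[OF assms(1-6)] by blast
  have "\<exists>S'. journey E (w ! x) (t + \<Delta> - 1) (w ! tour_pos E w tm x W) (tm (W - 1)) S' \<and>
      (\<forall>p. x \<le> p \<and> p \<le> tour_pos E w tm x W \<longrightarrow> w ! p \<in> S')"
    using journey_along_tour[OF assms(7,8) order.refl, of E w x] \<open>1 \<le> W\<close> by simp
  then obtain S'
    where along: "journey E (w ! x) (t + \<Delta> - 1) (w ! tour_pos E w tm x W) (tm (W - 1)) S'"
    and covered: "\<forall>p. x \<le> p \<and> p \<le> tour_pos E w tm x W \<longrightarrow> w ! p \<in> S'"
    by blast
  show ?thesis
    using journey_trans[OF to_start along] covered by blast
qed

lemma round_index_less:
  fixes r R j W \<Delta> :: nat
  assumes "r < R" and "j < W"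
  shows "r * (\<Delta> + W) + \<Delta> + j < R * (\<Delta> + W)"
proof -
  have "r * (\<Delta> + W) + \<Delta> + j < Suc r * (\<Delta> + W)" using \<open>j < W\<close> by simp
  also have "\<dots> \<le> R * (\<Delta> + W)" using \<open>r < R\<close> by (intro mult_right_mono) auto
  finally show ?thesis .
qed

lemma round_window:
  fixes g :: "nat \<Rightarrow> nat"
  assumes g_mono: "strict_mono_on {..<R * (\<Delta> + W)} g"
    and g_range: "\<forall>i<R * (\<Delta> + W). 1 \<le> g i \<and> g i \<le> L"
    and "r < R" and "1 \<le> \<Delta>" and "1 \<le> W"
  shows "1 \<le> g (r * (\<Delta> + W))" and "g (r * (\<Delta> + W)) + \<Delta> \<le> L + 1"
    and "g (r * (\<Delta> + W)) + \<Delta> - 1 < g (r * (\<Delta> + W) + \<Delta> + 0)"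
    and "strict_mono_on {..<W} (\<lambda>j. g (r * (\<Delta> + W) + \<Delta> + j))"
    and "0 < r \<Longrightarrow> g (r * (\<Delta> + W) - 1) < g (r * (\<Delta> + W))"
proof -
  let ?i = "r * (\<Delta> + W)"
  have "?i + \<Delta> < R * (\<Delta> + W)" using round_index_less[OF \<open>r < R\<close>, of 0] \<open>1 \<le> W\<close> by simp
  then have "g ?i + (\<Delta> - 1) \<le> g (?i + (\<Delta> - 1))" "g ?i + \<Delta> \<le> g (?i + \<Delta>)"
    and "1 \<le> g ?i" "g (?i + (\<Delta> - 1)) \<le> L"
    using strict_mono_on_add_le[OF g_mono] g_range[rule_format, of ?i]
      g_range[rule_format, of "?i + (\<Delta> - 1)"] \<open>r < R\<close> \<open>1 \<le> W\<close> by simp_all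
  then show "1 \<le> g ?i" "g ?i + \<Delta> \<le> L + 1" "g ?i + \<Delta> - 1 < g (?i + \<Delta> + 0)"
    using \<open>1 \<le> \<Delta>\<close> by auto
  show "strict_mono_on {..<W} (\<lambda>j. g (?i + \<Delta> + j))"
    using strict_mono_onD[OF g_mono] round_index_less[OF \<open>r < R\<close>] by (intro strict_mono_onI) auto
  show "g (?i - 1) < g ?i" if "0 < r"
    using strict_mono_onD[OF g_mono, of "?i - 1" ?i] \<open>?i + \<Delta> < R * (\<Delta> + W)\<close> \<open>r < R\<close> that
      \<open>1 \<le> W\<close> by simp
qed

lemma journey_through_rounds:
  fixes g :: "nat \<Rightarrow> nat"
  assumes conn: "delta_temporally_connected \<Delta> V L E" and "1 \<le> \<Delta>" and "1 \<le> W"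
    and g_mono: "strict_mono_on {..<R * (\<Delta> + W)} g"
    and g_range: "\<forall>i<R * (\<Delta> + W). 1 \<le> g i \<and> g i \<le> L"
    and "set w = V" and "\<forall>r. st r < length w" and "v \<in> V" and "r \<le> R"
  shows "\<exists>z S. z \<in> V \<and> journey E v 0 z (if r = 0 then 0 else g (r * (\<Delta> + W) - 1)) S \<and>
    (\<forall>r'<r. \<forall>p. st r' \<le> p \<and> p \<le> tour_pos E w (\<lambda>j. g (r' * (\<Delta> + W) + \<Delta> + j)) (st r') W
      \<longrightarrow> w ! p \<in> S)"
  using \<open>r \<le> R\<close>
proof (induction r)
  case 0
  show ?case using \<open>v \<in> V\<close> by (intro exI[of _ v] exI[of _ "{v}"]) (auto intro: journey_refl)
next
  case (Suc r)
  let ?P = "\<Delta> + W"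
  let ?tm = "\<lambda>j. g (r * ?P + \<Delta> + j)"
  let ?end = "tour_pos E w ?tm (st r) W"
  let ?start = "if r = 0 then 0 else g (r * ?P - 1)"
  obtain z S where z: "z \<in> V" and to_z: "journey E v 0 z ?start S"
    and covered: "\<forall>r'<r. \<forall>p. st r' \<le> p \<and> p \<le> tour_pos E w (\<lambda>j. g (r' * ?P + \<Delta> + j)) (st r') W
      \<longrightarrow> w ! p \<in> S"
    using Suc by auto
  note window = round_window[OF g_mono g_range _ \<open>1 \<le> \<Delta>\<close> \<open>1 \<le> W\<close>, of r]
  have "?start < g (r * ?P)" using window(1,5) Suc.prems by auto
  moreover have "w ! st r \<in> V" using assms(6,7) nth_mem by blast
  moreover note journey_round[where tm = ?tm and x = "st r" and w = w and s = ?start,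
      OF conn window(1,2) _ z _ window(4,3) \<open>1 \<le> W\<close>]
  ultimately obtain S' where to_end: "journey E z ?start (w ! ?end) (?tm (W - 1)) S'"
    and covered': "\<forall>p. st r \<le> p \<and> p \<le> ?end \<longrightarrow> w ! p \<in> S'"
    using Suc.prems by auto
  have "?tm (W - 1) = g (Suc r * ?P - 1)" using \<open>1 \<le> W\<close> by (simp add: algebra_simps)
  moreover have "?end < length w"
    using tour_pos_le_length[of "st r" w E ?tm W] assms(7)[rule_format, of r] by linarith
  then have "w ! ?end \<in> V" using assms(6) nth_mem by blast
  moreover have "\<forall>r'<Suc r. \<forall>p. st r' \<le> p \<and> p \<le> tour_pos E w (\<lambda>j. g (r' * ?P + \<Delta> + j)) (st r') W
      \<longrightarrow> w ! p \<in> S \<union> S'"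
    using covered covered' less_Suc_eq by auto
  ultimately show ?case
    using journey_trans[OF to_z to_end] by (intro exI[of _ "w ! ?end"] exI[of _ "S \<union> S'"]) simp
qed

lemma explorable_from_rounds:
  fixes g :: "nat \<Rightarrow> nat"
  assumes "temporal_graph V L E" and conn: "delta_temporally_connected \<Delta> V L E"
    and "1 \<le> \<Delta>" and "1 \<le> W"
    and g_mono: "strict_mono_on {..<R * (\<Delta> + W)} g"
    and g_range: "\<forall>i<R * (\<Delta> + W). 1 \<le> g i \<and> g i \<le> L"
    and "set w = V" and "\<forall>r. st r < length w"
    and cover: "segments_cover (\<lambda>r x. tour_pos E w (\<lambda>j. g (r * (\<Delta> + W) + \<Delta> + j)) x W) {..<R}
      st 0 (length w - 1)"
    and "v \<in> V"
  shows "explorable_from V L E v"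
proof -
  let ?end = "if R = 0 then 0 else g (R * (\<Delta> + W) - 1)"
  obtain z S where "journey E v 0 z ?end S"
    and covered: "\<forall>r<R. \<forall>p. st r \<le> p \<and> p \<le> tour_pos E w (\<lambda>j. g (r * (\<Delta> + W) + \<Delta> + j)) (st r) W
      \<longrightarrow> w ! p \<in> S"
    using journey_through_rounds[OF conn assms(3-8,10) order.refl] by blast
  then obtain vs ts where walk: "temporal_walk E (Suc 0) ?end vs ts" "hd vs = v" "set vs = S"
    by (blast dest: journey_imp_temporal_walk)
  have "?end \<le> L" using g_range \<open>1 \<le> W\<close> by (cases "R = 0") auto
  then have walk_L: "temporal_walk E 1 L vs ts"
    using walk(1) by (auto simp: temporal_walk_def)
  have "V \<subseteq> set vs"
  proof
    fix y assume "y \<in> V"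
    then obtain p where "p < length w" "w ! p = y" using \<open>set w = V\<close> by (metis in_set_conv_nth)
    moreover obtain r where "r < R"
      "st r \<le> p \<and> p \<le> tour_pos E w (\<lambda>j. g (r * (\<Delta> + W) + \<Delta> + j)) (st r) W"
      using cover \<open>p < length w\<close> unfolding segments_cover_def by (auto dest!: spec[of _ p])
    ultimately show "y \<in> set vs" using covered walk(3) by blast
  qed
  moreover have "set vs \<subseteq> V"
    using temporal_walk_set_subset[OF assms(1) walk_L] walk(2) \<open>v \<in> V\<close> by simp
  ultimately show ?thesis
    using walk_L walk(2) temporal_walk_length_le[OF walk_L] by (auto simp: explorable_from_def)
qed

lemma deficient_snapshot_budget:
  fixes k \<Delta> n M :: nat
  assumes "1 \<le> k" and "1 \<le> \<Delta>"
    and M: "real M \<ge> real_of_int \<lceil>18 * real k * ln (6 * real k)\<rceil> * (real \<Delta> + real n / real k)"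
  shows "4 * k * (\<Delta> + (n div k + 1)) \<le> M"
proof -
  have "exp 1 \<le> 6 * real k" using exp_le \<open>1 \<le> k\<close> by linarith
  then have "18 * real k * 1 \<le> 18 * real k * ln (6 * real k)"
    using \<open>1 \<le> k\<close> by (intro mult_left_mono) (simp_all add: ln_ge_iff)
  also have "\<dots> \<le> real_of_int \<lceil>18 * real k * ln (6 * real k)\<rceil>" by (rule le_of_int_ceiling)
  finally have "18 * real k * (real \<Delta> + real n / real k) \<le> real M"
    using M by (smt (verit) mult_right_mono of_nat_0_le_iff divide_nonneg_nonneg)
  moreover have "18 * real k * (real \<Delta> + real n / real k) = real (18 * (k * \<Delta>) + 18 * n)"
    using \<open>1 \<le> k\<close> by (simp add: field_simps)
  ultimately have "18 * (k * \<Delta>) + 18 * n \<le> M" by linarith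
  moreover have "k * (n div k) \<le> n" "k \<le> k * \<Delta>" using \<open>1 \<le> \<Delta>\<close> by (simp_all add: mult.commute)
  moreover have "4 * k * (\<Delta> + (n div k + 1)) = 4 * (k * \<Delta>) + 4 * (k * (n div k)) + 4 * k"
    by (simp add: algebra_simps)
  ultimately show ?thesis by linarith
qed

lemma explorable_from_deficient_rounds:
  fixes g :: "nat \<Rightarrow> nat"
  assumes "temporal_graph V L E" and "delta_temporally_connected \<Delta> V L E" and "1 \<le> \<Delta>"
    and tour: "tree_tour T V w" and "finite T" and "card V < k * W"
    and g_mono: "strict_mono_on {..<4 * k * (\<Delta> + W)} g"
    and g_good: "\<forall>i<4 * k * (\<Delta> + W). 1 \<le> g i \<and> g i \<le> L \<and> card (T - E (g i)) \<le> k"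
    and "v \<in> V"
  shows "explorable_from V L E v"
proof -
  have "1 \<le> W" using \<open>card V < k * W\<close> by (cases W) auto
  have "\<forall>r<4 * k. \<forall>j<W. card (T - E (g (r * (\<Delta> + W) + \<Delta> + j))) \<le> k"
    using g_good round_index_less by blast
  then obtain st where "\<forall>r. st r < length w"
    and "segments_cover (\<lambda>r x. tour_pos E w (\<lambda>j. g (r * (\<Delta> + W) + \<Delta> + j)) x W) {..<4 * k}
      st 0 (length w - 1)"
    using tree_tour_covering_rounds[where tm = "\<lambda>r j. g (r * (\<Delta> + W) + \<Delta> + j)",
        OF tour \<open>finite T\<close> _ \<open>card V < k * W\<close>] \<open>v \<in> V\<close> by blast
  moreover have "set w = V" using tour by (simp add: tree_tour_def)
  moreover have "\<forall>i<4 * k * (\<Delta> + W). 1 \<le> g i \<and> g i \<le> L" using g_good by blast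
  ultimately show ?thesis
    using explorable_from_rounds[OF assms(1-3) \<open>1 \<le> W\<close> g_mono] \<open>v \<in> V\<close> by blast
qed

theorem theorem1:
  fixes V :: "'a set" and L :: nat and E :: "nat \<Rightarrow> 'a set set"
    and \<Delta> k n :: nat and T :: "'a set set"
  assumes "temporal_graph V L E"
    and "card V = n"
    and "1 \<le> k" and "1 \<le> \<Delta>"
    and "delta_temporally_connected \<Delta> V L E"
    and "spanning_tree_of V (underlying_edges L E) T"
    and "real (card {i\<in>{1..L}. edge_deficient k T (E i)})
           \<ge> real_of_int \<lceil>18 * real k * ln (6 * real k)\<rceil> * (real \<Delta> + real n / real k)"
  shows "\<forall>v\<in>V. explorable_from V L E v"
proof
  fix v assume "v \<in> V"
  have "finite V" using assms(1) by (simp add: temporal_graph_def)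
  have tree: "V \<noteq> {}" "graph_connected V T" "\<forall>e\<in>T. e \<subseteq> V"
    using assms(6) by (auto simp: spanning_tree_of_def is_tree_def)
  then have "finite T" using \<open>finite V\<close> by (meson Pow_iff finite_Pow_iff finite_subset subsetI)
  obtain w where tour: "tree_tour T V w" using tree_tour_exists[OF \<open>finite V\<close> tree] by blast
  define W where "W = n div k + 1"
  define G where "G = {i\<in>{1..L}. edge_deficient k T (E i)}"
  obtain g where g: "bij_betw g {..<card G} G" "strict_mono_on {..<card G} g"
    using ex_bij_betw_strict_mono_card[of G] by (auto simp: G_def)
  have budget: "4 * k * (\<Delta> + W) \<le> card G"
    using deficient_snapshot_budget[OF assms(3,4,7)] by (simp add: G_def W_def)
  then have g_mono: "strict_mono_on {..<4 * k * (\<Delta> + W)} g"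
    and g_good: "\<forall>i<4 * k * (\<Delta> + W). 1 \<le> g i \<and> g i \<le> L \<and> card (T - E (g i)) \<le> k"
    using monotone_on_subset[OF g(2)] bij_betwE[OF g(1)] by (auto simp: G_def edge_deficient_def)
  have "card V < k * W"
    using dividend_less_times_div[of k n] assms(2,3) by (simp add: W_def algebra_simps)
  then show "explorable_from V L E v"
    using explorable_from_deficient_rounds[OF assms(1,5,4) tour \<open>finite T\<close> _ g_mono g_good \<open>v \<in> V\<close>]
    by blast
qed

end
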